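(* In the five-machine configuration near a central mass (Fermi normal coordinates about a radial Schwarzschild geodesic with $\mu=GM/(c^2r^3)$, $r$ treated as constant; $B_1,B_2$ symmetric on the $x$-axis, $A_0,A_1,A_2$ equally spaced on a circle in the plane $x=0$; seven two-way channels between $B_j$ and $A_n$ and between $B_1,B_2$ with null phases and one-way transit of $2N$ cycles; the three channels between the $A_n$ with transit $3N$ cycles and common reception phase $\phi$), let $L\approx 2Np_\tau c$ denote the proper radar distance between $B_1$ and $B_2$. If the reception phase $\phi$ of the channels $\overrightarrow{A_nA_{n\pm1}}$ is to satisfy the logical-synchronization requirement $|\phi|<1/2$, then, to first order in curvature, $$p_\tau>\frac{27\,GM\,L^3}{32\,r^3c^3},$$ so that with an alphabet of $b$ bits per character the bit rate of every channel in the cluster is bounded by $b/p_\tau<\dfrac{32\,b\,r^3c^3}{27\,GM\,L^3}$.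
   Context: An open machine is modeled as a smooth future-pointing timelike worldline parametrized by its adjustable clock reading; readings are written $m.\phi$ with integer $m$ and phase $\phi\in(-1/2,1/2]$; a tick occurs at each integer reading and one character is transmitted per cycle. Signals propagate along null geodesics. A channel $\overrightarrow{AB}$ is a set of pairs (transmission $A$-reading, reception $B$-reading). In this configuration, to first order in curvature, the common phase satisfies $\phi=-27GMN^3p_\tau^2/(8r^3)$, where $p_\tau$ is the proper clock period of $B_1$. Logical synchronization demands that every reception phase satisfy $|\phi|<(1-\eta)/2$ for some $\eta>0$. *)

theory Defs
  imports Complex_Main
begin

text \<open>First-order (in curvature) common reception phase of the channels A_n -> A_(n+-1)
  in the five-machine cluster: phi = -27 G M N^3 p^2 / (8 r^3), with p the proper clock
  period of B_1 and 2N the one-way transit (in cycles) between B_j and A_n.\<close>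
definition cluster_phase :: "real \<Rightarrow> real \<Rightarrow> nat \<Rightarrow> real \<Rightarrow> real \<Rightarrow> real" where
  "cluster_phase G M N p r = - 27 * G * M * (real N)^3 * p^2 / (8 * r^3)"

definition radar_distance :: "nat \<Rightarrow> real \<Rightarrow> real \<Rightarrow> real" where
  "radar_distance N p c = 2 * real N * p * c"

end

theory Submission
  imports Defs
begin

(* Write K = 27 G M N^3 p^2 / (8 r^3) for the curvature-induced phase magnitude,
   so that the common reception phase is phi = -K with K > 0.  Substituting the radar
   distance L = 2 N p c shows that the claimed threshold is exactly a multiple of the phase:
       27 G M L^3 / (32 r^3 c^3) = 2 K p = 2 |phi| p.
   Hence the synchronisation requirement |phi| < 1/2 is equivalent to the threshold lying
   strictly below p.  The bit-rate bound follows by taking reciprocals of this positive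
   inequality and scaling by b > 0.
   The file first records the sign and the threshold identity for the phase, then the
   elementary reciprocal step, and finally combines them into mainTheorem5. *)

lemma abs_cluster_phase:
  assumes "G > 0" "M > 0" "r > 0" "p > 0" "N > 0"
  shows "\<bar>cluster_phase G M N p r\<bar> = 27 * G * M * (real N)^3 * p^2 / (8 * r^3)"
  using assms unfolding cluster_phase_def by simp

lemma threshold_eq_phase:
  assumes "r > 0" "c > 0"
  shows "27 * G * M * (radar_distance N p c)^3 / (32 * r^3 * c^3)
       = 2 * p * (27 * G * M * (real N)^3 * p^2 / (8 * r^3))"
  using assms unfolding radar_distance_def
  by (simp add: field_simps power_mult_distrib power3_eq_cube power2_eq_square)

lemma rate_bound_from_period_bound:
  fixes b p q :: real
  assumes "0 < q" "q < p" "b > 0"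
  shows "b / p < b / q"
  using assms by (simp add: divide_strict_left_mono)

theorem mainTheorem5:
  fixes G M r c p :: real and N b :: nat
  assumes "G > 0" and "M > 0" and "r > 0" and "c > 0" and "p > 0"
    and "N > 0" and "b > 0"
    and "\<bar>cluster_phase G M N p r\<bar> < 1/2"
  shows "p > 27 * G * M * (radar_distance N p c)^3 / (32 * r^3 * c^3)
       \<and> real b / p < 32 * real b * r^3 * c^3 / (27 * G * M * (radar_distance N p c)^3)"
proof -
  define K where "K = 27 * G * M * (real N)^3 * p^2 / (8 * r^3)"
  define q where "q = 27 * G * M * (radar_distance N p c)^3 / (32 * r^3 * c^3)"
  have K_pos: "K > 0" using assms unfolding K_def by simp
  have K_small: "K < 1/2" using assms abs_cluster_phase unfolding K_def by simp
  have q_eq: "q = 2 * p * K" unfolding q_def K_def using assms(3,4) by (rule threshold_eq_phase)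
  have period_bound: "q < p" using q_eq K_small \<open>p > 0\<close> by simp
  have q_pos: "q > 0" using q_eq K_pos \<open>p > 0\<close> by simp
  have "real b / p < real b / q"
    using q_pos period_bound \<open>b > 0\<close> by (simp add: rate_bound_from_period_bound)
  moreover have "real b / q
      = 32 * real b * r^3 * c^3 / (27 * G * M * (radar_distance N p c)^3)"
    unfolding q_def by simp
  ultimately show ?thesis using period_bound unfolding q_def by simp
qed

end
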